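(* For integers $n\geq 3$ and $m\geq 2$, the windmill graph $W_n^m$ satisfies $\eta(W_n^m)=n-1$.
   Context: All graphs are finite, simple and undirected. The windmill graph $W_n^m$ consists of $m$ copies of the complete graph $K_n$ sharing a single common vertex; equivalently it is the join of $m$ disjoint copies of $K_{n-1}$ with a single vertex $K_1$. For a vertex $v$, $N(v)$ is its set of neighbours. For a positive integer $k$, $[k]=\{1,\dots,k\}$. For a labeling $f:V(G)\to[k]$ and $S\subseteq V(G)$, $f(S)=\sum_{u\in S}f(u)$. A labeling $f:V(G)\to[k]$ is an additive $k$-coloring if $f(N(u))\neq f(N(v))$ for every edge $(u,v)$ of $G$. The additive chromatic number $\eta(G)$ is the least $k$ for which $G$ has an additive $k$-coloring. *)

theory Defs
  imports Main
begin

text \<open>A finite simple graph is given by a vertex set V and a symmetric irreflexive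
  edge relation E (only its restriction to V matters).\<close>

definition nbhd :: "'a set \<Rightarrow> ('a \<Rightarrow> 'a \<Rightarrow> bool) \<Rightarrow> 'a \<Rightarrow> 'a set" where
  "nbhd V E u = {v \<in> V. E u v}"

definition additive_coloring ::
  "'a set \<Rightarrow> ('a \<Rightarrow> 'a \<Rightarrow> bool) \<Rightarrow> nat \<Rightarrow> ('a \<Rightarrow> nat) \<Rightarrow> bool" where
  "additive_coloring V E k f \<longleftrightarrow>
     (\<forall>v\<in>V. f v \<in> {1..k}) \<and>
     (\<forall>u\<in>V. \<forall>v\<in>V. E u v \<longrightarrow> (\<Sum>w\<in>nbhd V E u. f w) \<noteq> (\<Sum>w\<in>nbhd V E v. f w))"

definition additive_chromatic_number :: "'a set \<Rightarrow> ('a \<Rightarrow> 'a \<Rightarrow> bool) \<Rightarrow> nat" where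
  "additive_chromatic_number V E = (LEAST k. k \<ge> 1 \<and> (\<exists>f. additive_coloring V E k f))"

text \<open>Windmill graph W_n^m: centre (0,0); blade i (1 \<le> i \<le> m) has vertices (i,j), 1 \<le> j \<le> n-1.
  Centre adjacent to everything, blade vertices adjacent iff in the same blade.\<close>

definition windmill_vertices :: "nat \<Rightarrow> nat \<Rightarrow> (nat \<times> nat) set" where
  "windmill_vertices n m = {(0,0)} \<union> ({1..m} \<times> {1..n-1})"

definition windmill_edge :: "nat \<times> nat \<Rightarrow> nat \<times> nat \<Rightarrow> bool" where
  "windmill_edge p q \<longleftrightarrow> p \<noteq> q \<and> (fst p = 0 \<or> fst q = 0 \<or> fst p = fst q)"

end

theory Submission
  imports Defs
begin

text \<open>Two adjacent vertices with the same closed neighbourhood \<open>N[u] = N[v]\<close> have neighbourhood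
  sums differing exactly by \<open>f v - f u\<close>, so an additive colouring must separate them. In
  \<open>W_n^m\<close> the \<open>n - 1\<close> non-central vertices of a blade are such twins, whence \<open>\<eta> \<ge> n - 1\<close>.
  Conversely, labelling the centre 1 and the vertices of every blade \<open>1, \<dots>, n - 1\<close> gives
  the blade vertex labelled \<open>j\<close> the sum \<open>1 + s - j\<close>, where \<open>s = 1 + \<dots> + (n - 1)\<close>, and the
  centre the sum \<open>m s \<ge> 2 s\<close>, which is larger.\<close>

lemma sum_closed_nbhd:
  fixes f :: "'a \<Rightarrow> nat"
  assumes "finite V" "\<not> E u u"
  shows "(\<Sum>w\<in>insert u (nbhd V E u). f w) = f u + (\<Sum>w\<in>nbhd V E u. f w)"
  using assms by (simp add: nbhd_def)

lemma additive_coloring_closed_twins_distinct: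
  assumes col: "additive_coloring V E k f" and "finite V"
    and "u \<in> V" "v \<in> V" "E u v" "\<not> E u u" "\<not> E v v"
    and twins: "insert u (nbhd V E u) = insert v (nbhd V E v)"
  shows "f u \<noteq> f v"
proof
  assume "f u = f v"
  have "f u + (\<Sum>w\<in>nbhd V E u. f w) = f v + (\<Sum>w\<in>nbhd V E v. f w)"
    using sum_closed_nbhd[of V E u f] sum_closed_nbhd[of V E v f] twins assms by simp
  with \<open>f u = f v\<close> have "(\<Sum>w\<in>nbhd V E u. f w) = (\<Sum>w\<in>nbhd V E v. f w)" by simp
  with col assms show False unfolding additive_coloring_def by blast
qed

lemma card_closed_twin_clique_le:
  assumes col: "additive_coloring V E k f" and "finite V" and "K \<subseteq> V"
    and irrefl: "\<And>u. u \<in> K \<Longrightarrow> \<not> E u u"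
    and clique: "\<And>u v. u \<in> K \<Longrightarrow> v \<in> K \<Longrightarrow> u \<noteq> v \<Longrightarrow> E u v"
    and twins: "\<And>u v. u \<in> K \<Longrightarrow> v \<in> K \<Longrightarrow> insert u (nbhd V E u) = insert v (nbhd V E v)"
  shows "card K \<le> k"
proof -
  have "inj_on f K"
  proof (rule inj_onI, rule ccontr)
    fix u v assume "u \<in> K" "v \<in> K" "f u = f v" "u \<noteq> v"
    moreover have "f u \<noteq> f v"
      using additive_coloring_closed_twins_distinct[OF col \<open>finite V\<close>]
        \<open>K \<subseteq> V\<close> irrefl clique twins \<open>u \<in> K\<close> \<open>v \<in> K\<close> \<open>u \<noteq> v\<close> by blast
    ultimately show False by simp
  qed
  moreover have "f ` K \<subseteq> {1..k}"
    using col \<open>K \<subseteq> V\<close> unfolding additive_coloring_def by blast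
  ultimately have "card K \<le> card {1..k}"
    by (rule card_inj_on_le) simp
  then show ?thesis by simp
qed

lemma finite_windmill_vertices: "finite (windmill_vertices n m)"
  by (simp add: windmill_vertices_def)

lemma windmill_edge_irrefl: "\<not> windmill_edge p p"
  by (simp add: windmill_edge_def)

lemma nbhd_windmill_centre:
  "nbhd (windmill_vertices n m) windmill_edge (0, 0) = {1..m} \<times> {1..n-1}"
  by (auto simp: nbhd_def windmill_vertices_def windmill_edge_def)

lemma closed_nbhd_windmill_blade:
  assumes "i \<in> {1..m}" "j \<in> {1..n-1}"
  shows "insert (i, j) (nbhd (windmill_vertices n m) windmill_edge (i, j))
           = insert (0, 0) ({i} \<times> {1..n-1})"
  using assms by (auto simp: nbhd_def windmill_vertices_def windmill_edge_def)

lemma windmill_additive_coloring_ge: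
  assumes "m \<ge> 1" and col: "additive_coloring (windmill_vertices n m) windmill_edge k f"
  shows "n - 1 \<le> k"
proof -
  let ?K = "{1::nat} \<times> {1..n-1}"
  have "card ?K \<le> k"
  proof (rule card_closed_twin_clique_le[OF col finite_windmill_vertices])
    show "?K \<subseteq> windmill_vertices n m"
      using \<open>m \<ge> 1\<close> by (auto simp: windmill_vertices_def)
    show "windmill_edge u v" if "u \<in> ?K" "v \<in> ?K" "u \<noteq> v" for u v
      using that by (auto simp: windmill_edge_def)
    have "insert u (nbhd (windmill_vertices n m) windmill_edge u) = insert (0, 0) ?K"
      if u: "u \<in> ?K" for u
    proof -
      obtain j where "u = (1, j)" "j \<in> {1..n-1}"
        using u by blast
      with \<open>m \<ge> 1\<close> show ?thesis
        using closed_nbhd_windmill_blade[of 1 m j n] by simp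
    qed
    then show "insert u (nbhd (windmill_vertices n m) windmill_edge u)
                 = insert v (nbhd (windmill_vertices n m) windmill_edge v)"
      if "u \<in> ?K" "v \<in> ?K" for u v
      using that by (simp only:)
  qed (rule windmill_edge_irrefl)
  then show ?thesis by simp
qed

definition windmill_coloring :: "nat \<times> nat \<Rightarrow> nat" where
  "windmill_coloring p = (if fst p = 0 then 1 else snd p)"

lemma sum_windmill_coloring_row:
  assumes "i \<ge> 1"
  shows "(\<Sum>j\<in>{1..n-1}. windmill_coloring (i, j)) = (\<Sum>j\<in>{1..n-1}. j)"
  using assms by (simp add: windmill_coloring_def)

lemma sum_windmill_coloring_blade:
  assumes "i \<ge> 1"
  shows "(\<Sum>w\<in>{i} \<times> {1..n-1}. windmill_coloring w) = (\<Sum>j\<in>{1..n-1}. j)"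
  using sum.cartesian_product[of "\<lambda>i j. windmill_coloring (i, j)" "{1..n-1}" "{i}"]
    sum_windmill_coloring_row[OF assms] by (simp add: split_def)

lemma nbhd_sum_windmill_centre:
  "(\<Sum>w\<in>nbhd (windmill_vertices n m) windmill_edge (0, 0). windmill_coloring w)
     = m * (\<Sum>j\<in>{1..n-1}. j)"
proof -
  have "(\<Sum>w\<in>{1..m} \<times> {1..n-1}. windmill_coloring w)
          = (\<Sum>i\<in>{1..m}. \<Sum>j\<in>{1..n-1}. windmill_coloring (i, j))"
    using sum.cartesian_product[of "\<lambda>i j. windmill_coloring (i, j)" "{1..n-1}" "{1..m}"]
    by (simp add: split_def)
  also have "\<dots> = (\<Sum>i\<in>{1..m}. \<Sum>j\<in>{1..n-1}. j)"
    by (intro sum.cong refl) (simp add: windmill_coloring_def)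
  finally show ?thesis by (simp add: nbhd_windmill_centre)
qed

lemma nbhd_sum_windmill_blade:
  assumes "i \<in> {1..m}" "j \<in> {1..n-1}"
  shows "(\<Sum>w\<in>nbhd (windmill_vertices n m) windmill_edge (i, j). windmill_coloring w) + j
           = 1 + (\<Sum>j\<in>{1..n-1}. j)"
proof -
  have "windmill_coloring (i, j)
          + (\<Sum>w\<in>nbhd (windmill_vertices n m) windmill_edge (i, j). windmill_coloring w)
          = (\<Sum>w\<in>insert (0, 0) ({i} \<times> {1..n-1}). windmill_coloring w)"
    using sum_closed_nbhd[of "windmill_vertices n m" windmill_edge "(i, j)" windmill_coloring]
      finite_windmill_vertices windmill_edge_irrefl closed_nbhd_windmill_blade[OF assms] by simp
  also have "\<dots> = windmill_coloring (0, 0) + (\<Sum>w\<in>{i} \<times> {1..n-1}. windmill_coloring w)"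
    using assms by (intro sum.insert) auto
  also have "\<dots> = 1 + (\<Sum>j\<in>{1..n-1}. j)"
    using assms sum_windmill_coloring_blade[of i n] by (simp add: windmill_coloring_def)
  finally show ?thesis
    using assms by (simp add: windmill_coloring_def)
qed

lemma windmill_additive_coloring:
  assumes "n \<ge> 2" and "m \<ge> 2"
  shows "additive_coloring (windmill_vertices n m) windmill_edge (n - 1) windmill_coloring"
  unfolding additive_coloring_def
proof (intro conjI ballI impI)
  fix v assume "v \<in> windmill_vertices n m"
  then show "windmill_coloring v \<in> {1..n-1}"
    using \<open>n \<ge> 2\<close> by (auto simp: windmill_vertices_def windmill_coloring_def)
next
  let ?V = "windmill_vertices n m"
  let ?\<sigma> = "\<lambda>u. \<Sum>w\<in>nbhd ?V windmill_edge u. windmill_coloring w"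
  define s where "s = (\<Sum>j\<in>{1..n-1}. j)"
  have "1 \<le> s"
    unfolding s_def using member_le_sum[of 1 "{1..n-1}" "\<lambda>j. j"] \<open>n \<ge> 2\<close> by simp
  have blade_ne_centre: "?\<sigma> (i, j) \<noteq> ?\<sigma> (0, 0)" if "i \<in> {1..m}" "j \<in> {1..n-1}" for i j
  proof -
    have "?\<sigma> (i, j) + j = 1 + s" "?\<sigma> (0, 0) = m * s"
      using nbhd_sum_windmill_blade[OF that] nbhd_sum_windmill_centre[of n m] by (simp_all add: s_def)
    moreover have "2 * s \<le> m * s"
      using \<open>m \<ge> 2\<close> by simp
    moreover have "j \<ge> 1"
      using that by simp
    ultimately show ?thesis
      using \<open>1 \<le> s\<close> by linarith
  qed
  fix u v assume "u \<in> ?V" "v \<in> ?V" "windmill_edge u v"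
  then consider (centre_blade) i j where "u = (0, 0)" "v = (i, j)" "i \<in> {1..m}" "j \<in> {1..n-1}"
    | (blade_centre) i j where "u = (i, j)" "v = (0, 0)" "i \<in> {1..m}" "j \<in> {1..n-1}"
    | (same_blade) i j j' where "u = (i, j)" "v = (i, j')" "j \<noteq> j'" "i \<in> {1..m}"
        "j \<in> {1..n-1}" "j' \<in> {1..n-1}"
    unfolding windmill_vertices_def windmill_edge_def by fastforce
  then show "?\<sigma> u \<noteq> ?\<sigma> v"
  proof cases
    case same_blade
    then show ?thesis
      using nbhd_sum_windmill_blade[of i m j n] nbhd_sum_windmill_blade[of i m j' n] by auto
  qed (use blade_ne_centre in metis)+
qed

theorem mainTheorem7:
  fixes n m :: nat
  assumes "n \<ge> 3" and "m \<ge> 2"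
  shows "additive_chromatic_number (windmill_vertices n m) windmill_edge = n - 1"
  unfolding additive_chromatic_number_def
proof (rule Least_equality)
  show "1 \<le> n - 1 \<and> (\<exists>f. additive_coloring (windmill_vertices n m) windmill_edge (n - 1) f)"
    using assms windmill_additive_coloring[of n m] by auto
next
  fix k assume "1 \<le> k \<and> (\<exists>f. additive_coloring (windmill_vertices n m) windmill_edge k f)"
  then obtain f where "additive_coloring (windmill_vertices n m) windmill_edge k f"
    by blast
  with \<open>m \<ge> 2\<close> show "n - 1 \<le> k"
    using windmill_additive_coloring_ge[of m n k f] by simp
qed

end
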